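(* For all $n,m\in\mathbb{N}$, \[ \sum_{j=0}^{n}\sum_{i=0}^{j}\frac{\binom{2n+3+m}{i}}{\binom{2n+1}{j}}=2^{m}(n+1)\left(H_{n+1}-\sum_{k=1}^{m}\frac{1}{2^{k-1}k}\left(\frac{\binom{2n+2+k}{n+1}}{\binom{2n+2}{n+1}}-1\right)\right). \]
   Context: $H_n=\sum_{k=1}^{n}\frac1k$ is the $n$-th harmonic number. Empty sums are $0$. *)

theory Defs
  imports "HOL-Analysis.Analysis"
begin

end

theory Submission
  imports Defs
begin

text \<open>
  Write \<open>D a = (\<Sum>j\<le>n. \<Sum>i\<le>j. (a choose i) / (2n+1 choose j))\<close>. Pascal's rule gives
  \<open>D (a+1) = 2 D a - T a\<close> with \<open>T a = (\<Sum>j\<le>n. (a choose j) / (2n+1 choose j))\<close>, and \<open>T a\<close>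
  telescopes because \<open>q j = (a choose j) / (N choose j)\<close> satisfies \<open>(N-j) q (j+1) = (a-j) q j\<close>;
  this drives the induction on \<open>m\<close>. For the base case \<open>m = 0\<close>, two Pascal steps reduce \<open>D (2n+3)\<close>
  to the sum \<open>U n\<close> over \<open>j \<le> n\<close> of the ratios \<open>R j\<close> of the partial row sums of row \<open>2n+1\<close> to
  \<open>2n+1 choose j\<close>. Passing from row \<open>2n+1\<close> to row \<open>2n+3\<close> multiplies \<open>R j\<close> by a quadratic
  in \<open>j\<close>, and a summation by parts against the recurrence \<open>(N-k) R (k+1) = (N-k) + (k+1) R k\<close>
  expresses \<open>U (n+1)\<close> through \<open>U n\<close>, which yields \<open>U n\<close> in closed form by induction on \<open>n\<close>.
\<close>

lemma real_Suc_times_binomial_Suc: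
  "(real k + 1) * real (n choose Suc k) = (real n - real k) * real (n choose k)"
proof (cases "k < n")
  case True
  have "Suc k * (n choose Suc k) = (n - k) * (n choose k)"
    using binomial_absorption[of k n] binomial_absorb_comp[of n k] by simp
  then have "real (Suc k * (n choose Suc k)) = real ((n - k) * (n choose k))" by simp
  then show ?thesis using True by (simp add: of_nat_diff algebra_simps)
next
  case False
  then show ?thesis by (cases "k = n") (simp_all add: binomial_eq_0)
qed

lemma real_binomial_Suc_left:
  "(real n + 1 - real k) * real (Suc n choose k) = (real n + 1) * real (n choose k)"
proof (cases "k \<le> Suc n")
  case True
  have "real (Suc n - k) * real (Suc n choose k) = real (Suc n) * real (n choose k)"
    using binomial_absorb_comp[of "Suc n" k] by (simp only: diff_Suc_1 flip: of_nat_mult)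
  then show ?thesis using True by (simp add: of_nat_diff add.commute)
qed (simp add: binomial_eq_0)

lemma sum_binomial_Suc_left:
  "(\<Sum>i=0..j. real (Suc n choose i)) = 2 * (\<Sum>i=0..j. real (n choose i)) - real (n choose j)"
  by (induction j) simp_all

definition partial_sum_ratio :: "nat \<Rightarrow> nat \<Rightarrow> real" where
  "partial_sum_ratio n j = (\<Sum>i=0..j. real (n choose i)) / real (n choose j)"

lemma partial_sum_ratio_0 [simp]: "partial_sum_ratio n 0 = 1"
  by (simp add: partial_sum_ratio_def)

lemma partial_sum_ratio_Suc:
  assumes "k < n"
  shows "(real n - real k) * partial_sum_ratio n (Suc k)
       = real n - real k + (real k + 1) * partial_sum_ratio n k"
proof -
  have pos: "real (n choose k) > 0" "real (n choose Suc k) > 0" using assms by simp_all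
  define s where "s = (\<Sum>i=0..k. real (n choose i))"
  have "(real n - real k) / real (n choose Suc k) = (real k + 1) / real (n choose k)"
    using real_Suc_times_binomial_Suc[of k n] pos by (simp add: field_simps)
  then have "(real n - real k) * (s / real (n choose Suc k)) = (real k + 1) * (s / real (n choose k))"
    by (metis times_divide_eq_left times_divide_eq_right)
  moreover have "partial_sum_ratio n (Suc k) = s / real (n choose Suc k) + 1"
    using pos by (simp add: partial_sum_ratio_def s_def add_divide_distrib)
  ultimately show ?thesis
    by (simp add: partial_sum_ratio_def s_def algebra_simps)
qed

lemma partial_sum_ratio_Suc_left:
  assumes "j \<le> n"
  shows "(real n + 1) * partial_sum_ratio (Suc n) j = (real n + 1 - real j) * (2 * partial_sum_ratio n j - 1)"
proof -
  have pos: "real (n choose j) > 0" "real (Suc n choose j) > 0" using assms by simp_all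
  define s where "s = 2 * (\<Sum>i=0..j. real (n choose i)) - real (n choose j)"
  have "(real n + 1) / real (Suc n choose j) = (real n + 1 - real j) / real (n choose j)"
    using real_binomial_Suc_left[of n j] pos by (simp add: field_simps)
  then have "(real n + 1) * (s / real (Suc n choose j)) = (real n + 1 - real j) * (s / real (n choose j))"
    by (metis times_divide_eq_left times_divide_eq_right)
  also have "s / real (n choose j) = 2 * partial_sum_ratio n j - 1"
    using pos by (simp add: s_def partial_sum_ratio_def diff_divide_distrib)
  finally show ?thesis
    by (simp add: partial_sum_ratio_def sum_binomial_Suc_left s_def)
qed

lemma partial_sum_ratio_add_two:
  assumes "j \<le> n"
  shows "(real n + 1) * (real n + 2) * partial_sum_ratio (n + 2) j
       = (real n + 1 - real j) * (real n + 2 - real j) * (4 * partial_sum_ratio n j - 2)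
         - (real n + 1) * (real n + 2 - real j)"
proof -
  have step2: "(real n + 2) * partial_sum_ratio (n + 2) j
      = (real n + 2 - real j) * (2 * partial_sum_ratio (Suc n) j - 1)"
    using partial_sum_ratio_Suc_left[of j "Suc n"] assms by (simp add: add.commute)
  have "(real n + 1) * (real n + 2) * partial_sum_ratio (n + 2) j
      = (real n + 1) * ((real n + 2) * partial_sum_ratio (n + 2) j)"
    by (simp only: mult.assoc)
  also have "\<dots> = (real n + 2 - real j) * (2 * ((real n + 1) * partial_sum_ratio (Suc n) j) - (real n + 1))"
    unfolding step2 by (simp add: algebra_simps)
  also have "\<dots> = (real n + 2 - real j) * (2 * ((real n + 1 - real j) * (2 * partial_sum_ratio n j - 1)) - (real n + 1))"
    unfolding partial_sum_ratio_Suc_left[OF assms] ..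
  finally show ?thesis by (simp add: algebra_simps)
qed

lemma partial_sum_ratio_middle:
  "partial_sum_ratio (2 * n + 1) (Suc n) = partial_sum_ratio (2 * n + 1) n + 1"
proof -
  have "(real n + 1) * partial_sum_ratio (2 * n + 1) (Suc n) = (real n + 1) * (1 + partial_sum_ratio (2 * n + 1) n)"
    using partial_sum_ratio_Suc[of n "2 * n + 1"] by (simp add: algebra_simps)
  then show ?thesis by simp
qed

lemma sum_partial_sum_ratio_by_parts:
  fixes w :: "nat \<Rightarrow> real"
  assumes "r \<le> n"
  shows "(\<Sum>j=0..r. (w j * (real n + 1 - real j) - w (Suc j) * (real j + 1)) * partial_sum_ratio n j)
       = (\<Sum>j=0..r. w j * (real n + 1 - real j)) - w (Suc r) * (real r + 1) * partial_sum_ratio n r"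
  using assms
proof (induction r)
  case (Suc r)
  have "w (Suc r) * ((real n - real r) * partial_sum_ratio n (Suc r))
      = w (Suc r) * (real n - real r + (real r + 1) * partial_sum_ratio n r)"
    using partial_sum_ratio_Suc[of r n] Suc.prems by simp
  then show ?case using Suc by (simp add: algebra_simps)
qed simp

lemma sum_partial_sum_ratio_lower_half_Suc:
  fixes n :: nat
  defines "N \<equiv> 2 * n + 1"
  shows "(real N + 1) * (real N + 2) * (\<Sum>j=0..Suc n. partial_sum_ratio (N + 2) j)
       = (real N + 2) * (real N + 3) * (\<Sum>j=0..n. partial_sum_ratio N j) + (real n + 1) * (real n + 2)"
proof -
  define R where "R = partial_sum_ratio N"
  \<comment> \<open>chosen so that \<open>w j (N+1-j) - w (j+1) (j+1) = 4 (N+1-j) (N+2-j) - (N+2) (N+3)\<close>\<close>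
  define w where "w j = 3 * real N + 7 - 2 * real j" for j :: nat
  define G where "G j = (real N + 1 - real j) * (real N + 2 - real j) * (4 * R j - 2)
    - (real N + 1) * (real N + 2 - real j)" for j :: nat
  have "(real N + 1) * (real N + 2) * (\<Sum>j=0..Suc n. partial_sum_ratio (N + 2) j) = (\<Sum>j=0..Suc n. G j)"
    unfolding sum_distrib_left G_def R_def
    by (intro sum.cong refl partial_sum_ratio_add_two) (simp add: N_def)
  also have "\<dots> = (\<Sum>j=0..n. G j) + w (Suc n) * (real n + 1) * R n"
    using partial_sum_ratio_middle[of n] by (simp add: G_def R_def w_def N_def algebra_simps)
  also have "(\<Sum>j=0..n. G j)
      = (\<Sum>j=0..n. (w j * (real N + 1 - real j) - w (Suc j) * (real j + 1)) * R j)
        + (real N + 2) * (real N + 3) * (\<Sum>j=0..n. R j)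
        - (\<Sum>j=0..n. w j * (real N + 1 - real j)) + (\<Sum>j=0..n. real N + 1 - 2 * real j)"
    by (simp add: G_def w_def sum_distrib_left flip: sum.distrib sum_subtractf) (simp add: algebra_simps)
  also have "(\<Sum>j=0..n. (w j * (real N + 1 - real j) - w (Suc j) * (real j + 1)) * R j)
      = (\<Sum>j=0..n. w j * (real N + 1 - real j)) - w (Suc n) * (real n + 1) * R n"
    unfolding R_def by (rule sum_partial_sum_ratio_by_parts) (simp add: N_def)
  also have "(\<Sum>j=0..n. real N + 1 - 2 * real j) = (real n + 1) * (real n + 2)"
  proof -
    have "(\<Sum>j=0..k. a - 2 * real j) = (real k + 1) * (a - real k)" for a :: real and k
      by (induction k) (simp_all add: algebra_simps)
    from this[of "real N + 1" n] show ?thesis by (simp add: N_def algebra_simps)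
  qed
  finally show ?thesis by (simp add: R_def)
qed

lemma sum_partial_sum_ratio_lower_half:
  "4 * (\<Sum>j=0..n. partial_sum_ratio (2 * n + 1) j) = (real n + 1) * (2 + 2 * harm (2 * n + 2) - harm (n + 1))"
proof (induction n)
  case 0
  show ?case by (simp add: harm_expand numeral_2_eq_2 harm_Suc)
next
  case (Suc n)
  define U where "U = (\<Sum>j=0..n. partial_sum_ratio (2 * n + 1) j)"
  define U' where "U' = (\<Sum>j=0..Suc n. partial_sum_ratio (2 * Suc n + 1) j)"
  define V where "V = 2 + 2 * harm (2 * n + 2) - (harm (n + 1) :: real)"
  have step: "(2 * real n + 2) * (2 * real n + 3) * U'
      = (2 * real n + 3) * (2 * real n + 4) * U + (real n + 1) * (real n + 2)"
    using sum_partial_sum_ratio_lower_half_Suc[of n] by (simp add: U_def U'_def algebra_simps)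
  have "(2 * real n + 2) * ((2 * real n + 3) * (4 * U'))
      = (2 * real n + 3) * (2 * real n + 4) * (4 * U) + 4 * (real n + 1) * (real n + 2)"
    using step by (simp add: algebra_simps)
  also have "\<dots> = (2 * real n + 2) * ((real n + 2) * ((2 * real n + 3) * V + 2))"
    using Suc.IH unfolding U_def[symmetric] V_def[symmetric] by (simp add: algebra_simps)
  finally have "(2 * real n + 3) * (4 * U') = (real n + 2) * ((2 * real n + 3) * V + 2)"
    by (rule mult_left_cancel[THEN iffD1, rotated]) simp
  then have "4 * U' = (real n + 2) * (V + 2 / (2 * real n + 3))"
    by (simp add: field_simps)
  also have "V + 2 / (2 * real n + 3) = 2 + 2 * harm (2 * Suc n + 2) - harm (Suc n + 1)"
  proof -
    have "harm (2 * Suc n + 2) = harm (2 * n + 2) + 1 / (2 * real n + 3) + 1 / (2 * real n + 4)"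
      by (simp add: numeral_eq_Suc harm_Suc inverse_eq_divide algebra_simps)
    moreover have "harm (Suc n + 1) = harm (n + 1) + 1 / (real n + 2)"
      by (simp add: harm_Suc inverse_eq_divide algebra_simps)
    moreover have "2 / (2 * real n + 4) = 1 / (real n + 2)"
      by (simp add: field_simps)
    ultimately show ?thesis by (simp add: V_def)
  qed
  finally show ?case by (simp add: U'_def)
qed

lemma sum_inverse_eq_harm_diff:
  "r \<le> n \<Longrightarrow> (\<Sum>j=0..r. 1 / (real n + 1 - real j)) = harm (Suc n) - harm (n - r)"
proof (induction r)
  case (Suc r)
  have "n - r = Suc (n - Suc r)" using Suc.prems by simp
  then have "harm (n - r) = harm (n - Suc r) + 1 / (real n + 1 - real (Suc r))"
    using Suc.prems by (simp add: harm_Suc inverse_eq_divide of_nat_diff)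
  then show ?case using Suc by simp
qed (simp add: harm_Suc inverse_eq_divide)

lemma sum_binomial_Suc_left_ratio:
  assumes "r \<le> n"
  shows "(\<Sum>j=0..r. real (Suc n choose j) / real (n choose j)) = (real n + 1) * (harm (Suc n) - harm (n - r))"
proof -
  have "(\<Sum>j=0..r. real (Suc n choose j) / real (n choose j)) = (\<Sum>j=0..r. (real n + 1) * (1 / (real n + 1 - real j)))"
    using real_binomial_Suc_left[of n] assms by (intro sum.cong refl) (simp add: field_simps)
  also have "\<dots> = (real n + 1) * (\<Sum>j=0..r. 1 / (real n + 1 - real j))"
    by (rule sum_distrib_left[symmetric])
  finally show ?thesis
    using sum_inverse_eq_harm_diff[OF assms] by simp
qed

lemma binomial_ratio_Suc:
  assumes "k < n"
  shows "(real n - real k) * (real (a choose Suc k) / real (n choose Suc k))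
       = (real a - real k) * (real (a choose k) / real (n choose k))"
proof -
  have pos: "real (n choose k) > 0" "real (n choose Suc k) > 0" using assms by simp_all
  have "(real n - real k) / real (n choose Suc k) = (real k + 1) / real (n choose k)"
    using real_Suc_times_binomial_Suc[of k n] pos by (simp add: field_simps)
  then have "(real n - real k) * (real (a choose Suc k) / real (n choose Suc k))
      = (real k + 1) * real (a choose Suc k) / real (n choose k)"
    by (metis times_divide_eq_left times_divide_eq_right mult.commute)
  then show ?thesis by (simp add: real_Suc_times_binomial_Suc)
qed

lemma sum_binomial_ratio:
  assumes "r < n"
  shows "(real a - real n - 1) * (\<Sum>j=0..r. real (a choose j) / real (n choose j))
       = (real n - real r) * (real (a choose Suc r) / real (n choose Suc r)) - (real n + 1)"
  using assms
proof (induction r)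
  case 0
  then show ?case by (simp add: field_simps)
next
  case (Suc r)
  define q where "q j = real (a choose j) / real (n choose j)" for j
  have "(real n - real (Suc r)) * q (Suc (Suc r)) = (real a - real (Suc r)) * q (Suc r)"
    unfolding q_def using binomial_ratio_Suc[OF Suc.prems] .
  moreover have "(real a - real n - 1) * (\<Sum>j=0..r. q j) = (real n - real r) * q (Suc r) - (real n + 1)"
    using Suc unfolding q_def by simp
  ultimately have "(real a - real n - 1) * (\<Sum>j=0..Suc r. q j)
      = (real n - real (Suc r)) * q (Suc (Suc r)) - (real n + 1)"
    by (simp add: algebra_simps)
  then show ?case by (simp add: q_def)
qed

lemma binomial_Suc_central: "(2 * n + 2) choose (n + 1) = 2 * ((2 * n + 1) choose (n + 1))"
proof -
  have "(2 * n + 1) choose n = (2 * n + 1) choose (n + 1)"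
    using binomial_symmetric[of n "2 * n + 1"] by simp
  then show ?thesis by simp
qed

lemma sum_binomial_ratio_lower_half:
  "(real a - 2 * real n - 2) * (\<Sum>j=0..n. real (a choose j) / real ((2 * n + 1) choose j))
   = 2 * (real n + 1) * (real (a choose (n + 1)) / real ((2 * n + 2) choose (n + 1)) - 1)"
proof -
  define b where "b = real ((2 * n + 1) choose (n + 1))"
  have "b > 0" unfolding b_def of_nat_0_less_iff by (rule zero_less_binomial) simp
  then have "(real n + 1) * (real (a choose (n + 1)) / b) - (2 * real n + 2)
      = 2 * (real n + 1) * (real (a choose (n + 1)) / (2 * b) - 1)"
    by (simp add: field_simps)
  with sum_binomial_ratio[of n "2 * n + 1" a] show ?thesis
    unfolding binomial_Suc_central of_nat_mult b_def by (simp add: algebra_simps)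
qed

lemma double_sum_binomial_Suc_left:
  fixes c :: "nat \<Rightarrow> real"
  shows "(\<Sum>j=0..n. \<Sum>i=0..j. real (Suc a choose i) / c j)
       = 2 * (\<Sum>j=0..n. \<Sum>i=0..j. real (a choose i) / c j) - (\<Sum>j=0..n. real (a choose j) / c j)"
  by (simp add: sum_binomial_Suc_left sum_distrib_left diff_divide_distrib sum_subtractf
      flip: sum_divide_distrib)

lemma double_sum_binomial_eq_harm:
  "(\<Sum>j=0..n. \<Sum>i=0..j. real ((2 * n + 3) choose i) / real ((2 * n + 1) choose j))
   = real (n + 1) * harm (n + 1)"
proof -
  define N where "N = 2 * n + 1"
  define D where "D a = (\<Sum>j=0..n. \<Sum>i=0..j. real (a choose i) / real (N choose j))" for a
  define T where "T a = (\<Sum>j=0..n. real (a choose j) / real (N choose j))" for a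
  have "D (Suc a) = 2 * D a - T a" for a
    unfolding D_def T_def by (rule double_sum_binomial_Suc_left)
  then have "D (2 * n + 3) = 4 * D N - 2 * T N - T (Suc N)"
    by (simp add: N_def eval_nat_numeral)
  moreover have "4 * D N = (real n + 1) * (2 + 2 * harm (2 * n + 2) - harm (n + 1))"
    using sum_partial_sum_ratio_lower_half[of n]
    by (simp add: D_def N_def partial_sum_ratio_def sum_divide_distrib)
  moreover have "T N = real n + 1"
    by (simp add: T_def N_def)
  moreover have "T (Suc N) = (2 * real n + 2) * (harm (2 * n + 2) - harm (n + 1))"
    using sum_binomial_Suc_left_ratio[of n N] by (simp add: T_def N_def algebra_simps)
  ultimately have "D (2 * n + 3) = real (n + 1) * harm (n + 1)"
    by (simp add: algebra_simps)
  then show ?thesis by (simp add: D_def N_def)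
qed

theorem mainTheorem7:
  fixes n m :: nat
  shows "(\<Sum>j=0..n. \<Sum>i=0..j. real ((2*n+3+m) choose i) / real ((2*n+1) choose j))
       = 2^m * real (n+1) * (harm (n+1)
           - (\<Sum>k=1..m. 1 / (2^(k-1) * real k) *
               (real ((2*n+2+k) choose (n+1)) / real ((2*n+2) choose (n+1)) - 1)))"
proof (induction m)
  case 0
  show ?case using double_sum_binomial_eq_harm[of n] by simp
next
  case (Suc m)
  define M where "M = 2*n+3+m"
  define F where "F k = 1 / (2^(k-1) * real k) *
    (real ((2*n+2+k) choose (n+1)) / real ((2*n+2) choose (n+1)) - 1)" for k
  define L where "L = (\<Sum>j=0..n. \<Sum>i=0..j. real (M choose i) / real ((2*n+1) choose j))"
  define T where "T = (\<Sum>j=0..n. real (M choose j) / real ((2*n+1) choose j))"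
  define \<rho> where "\<rho> = real (M choose (n+1)) / real ((2*n+2) choose (n+1))"
  have M: "2*n+3+Suc m = Suc M" "2*n+2+Suc m = M" by (simp_all add: M_def)
  have "(\<Sum>j=0..n. \<Sum>i=0..j. real ((2*n+3+Suc m) choose i) / real ((2*n+1) choose j)) = 2 * L - T"
    unfolding M(1) L_def T_def by (rule double_sum_binomial_Suc_left)
  moreover have "L = 2^m * real (n+1) * (harm (n+1) - sum F {1..m})"
    using Suc.IH unfolding L_def F_def M_def .
  moreover have "real (Suc m) * T = 2 * real (n+1) * (\<rho> - 1)"
    using sum_binomial_ratio_lower_half[of M n] by (simp add: T_def \<rho>_def M_def)
  moreover have "F (Suc m) = 1 / (2^m * real (Suc m)) * (\<rho> - 1)"
    unfolding F_def \<rho>_def M(2) by (simp only: diff_Suc_1)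
  moreover have "2 * (p * c * (h - g)) - t = 2 * p * c * (h - (g + 1 / (p * q) * r))"
    if "q * t = 2 * c * r" "p > 0" "q > 0" for p q c h g r t :: real
    using that by (simp add: field_simps)
  ultimately show ?case
    unfolding F_def[symmetric] by (simp add: power_Suc mult.assoc)
qed

end
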